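(* In the Setting below, for any index $i$ and any two $C_i$-tests $S,S'\in\mathcal{T}$, either $L(S)\subseteq L(S')$, or $L(S')\subseteq L(S)$, or $L(S)\cap L(S')=\emptyset$.
   Context: A test $T$ on $[n]$ separates $i\neq j$ if $|\{i,j\}\cap T|=1$. The classes induced by a collection $\mathcal{T}'$ of tests are the equivalence classes of the relation "$i,j$ are not separated by any test of $\mathcal{T}'$". Setting: $\mathcal{T}$ is a collection of distinct tests on $[n]$ that is a test cover, and $\mathcal{F}\subseteq\mathcal{T}$ has the property that for every $T\in\mathcal{T}\setminus\mathcal{F}$, $\mathcal{F}\cup\{T\}$ induces at most one more class than $\mathcal{F}$, and for every two tests $T,T'\in\mathcal{T}\setminus\mathcal{F}$, $\mathcal{F}\cup\{T,T'\}$ induces at most two more classes than $\mathcal{F}$. Let $C_1,\dots,C_l$ be the classes induced by $\mathcal{F}$. For $C\subseteq[n]$, a test $S\in\mathcal{T}$ is a $C$-test if $S\cap C\neq\emptyset$ and $C\setminus S\neq\emptyset$; its local portion is $L(S)=S\cap C$ and global portion $G(S)=S\setminus C$. It is assumed that every $C_i$-test $S$ satisfies $|S\cap C_i|\le |C_i|/2$ (for each $i$). *)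

theory Defs
  imports Main
begin

definition is_test :: "nat \<Rightarrow> nat set \<Rightarrow> bool" where
  "is_test n T \<longleftrightarrow> T \<subseteq> {1..n}"

definition separates :: "nat set \<Rightarrow> nat \<Rightarrow> nat \<Rightarrow> bool" where
  "separates T i j \<longleftrightarrow> i \<noteq> j \<and> card ({i, j} \<inter> T) = 1"

definition test_cover :: "nat \<Rightarrow> nat set set \<Rightarrow> bool" where
  "test_cover n \<T> \<longleftrightarrow> (\<forall>T\<in>\<T>. is_test n T) \<and>
     (\<forall>i\<in>{1..n}. \<forall>j\<in>{1..n}. i \<noteq> j \<longrightarrow> (\<exists>T\<in>\<T>. separates T i j))"

definition not_separated :: "nat set set \<Rightarrow> nat \<Rightarrow> nat \<Rightarrow> bool" where
  "not_separated \<F> i j \<longleftrightarrow> (\<forall>T\<in>\<F>. \<not> separates T i j)"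

definition induced_classes :: "nat \<Rightarrow> nat set set \<Rightarrow> nat set set" where
  "induced_classes n \<F> = (\<lambda>i. {j \<in> {1..n}. not_separated \<F> i j}) ` {1..n}"

definition num_classes :: "nat \<Rightarrow> nat set set \<Rightarrow> nat" where
  "num_classes n \<F> = card (induced_classes n \<F>)"

definition is_C_test :: "nat set \<Rightarrow> nat set \<Rightarrow> bool" where
  "is_C_test C S \<longleftrightarrow> S \<inter> C \<noteq> {} \<and> C - S \<noteq> {}"

definition local_portion :: "nat set \<Rightarrow> nat set \<Rightarrow> nat set" where
  "local_portion C S = S \<inter> C"

definition global_portion :: "nat set \<Rightarrow> nat set \<Rightarrow> nat set" where
  "global_portion C S = S - C"

end

theory Submission
  imports Defs
begin

(* Suppose two C-tests S, S' have crossing local portions: there are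
   points a \<in> S \<inter> S', b \<in> S - S' and d \<in> S' - S inside the class C.  Since both
   local portions have at most |C|/2 elements and they intersect, they cannot cover C,
   so some e \<in> C lies in neither test.  The four points a, b, d, e are pairwise
   separated by {S, S'}, hence adding S and S' to \<F> splits C into at least four
   classes, i.e. creates at least three new classes.  As C-tests are not in \<F>, this
   contradicts the hypothesis that two tests add at most two classes. *)

lemma separates_iff: "separates T i j \<longleftrightarrow> \<not> (i \<in> T \<longleftrightarrow> j \<in> T)"
proof (cases "i = j")
  case True
  then show ?thesis by (simp add: separates_def)
next
  case False
  then show ?thesis
    by (cases "i \<in> T"; cases "j \<in> T") (auto simp: separates_def Int_insert_left)
qed

definition agree_class :: "nat \<Rightarrow> nat set set \<Rightarrow> nat \<Rightarrow> nat set" where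
  "agree_class n F x = {j \<in> {1..n}. \<forall>T\<in>F. x \<in> T \<longleftrightarrow> j \<in> T}"

lemma induced_classes_eq: "induced_classes n F = agree_class n F ` {1..n}"
  unfolding induced_classes_def agree_class_def not_separated_def separates_iff by simp

lemma agree_class_self: "x \<in> {1..n} \<Longrightarrow> x \<in> agree_class n F x"
  by (simp add: agree_class_def)

lemma agree_class_cong: "y \<in> agree_class n F x \<Longrightarrow> agree_class n F y = agree_class n F x"
  unfolding agree_class_def by auto

lemma agree_class_separated:
  assumes "x \<in> {1..n}" "y \<in> {1..n}" "T \<in> F" "separates T x y"
  shows "agree_class n F x \<noteq> agree_class n F y"
  using assms agree_class_self[of x n F] agree_class_self[of y n F]
  by (auto simp: agree_class_def separates_iff)

text \<open>A test of F never cuts a class of F, so C-tests lie outside F.\<close>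

lemma C_test_not_in:
  assumes "C \<in> induced_classes n F" "is_C_test C R"
  shows "R \<notin> F"
proof
  assume "R \<in> F"
  from assms(2) obtain y z where "y \<in> R \<inter> C" "z \<in> C - R" by (auto simp: is_C_test_def)
  with \<open>R \<in> F\<close> assms(1) show False by (auto simp: induced_classes_eq agree_class_def)
qed

lemma card_surj_fibre:
  assumes "finite A" "f ` A = B" "K \<subseteq> A" "f ` K \<subseteq> {c}" "c \<in> B"
  shows "card B + card K \<le> card A + 1"
proof -
  have "B - {c} \<subseteq> f ` (A - K)"
    using assms(2,4) by blast
  then have "card (B - {c}) \<le> card (A - K)"
    using assms(1) by (meson card_image_le finite_Diff card_mono finite_imageI order_trans)
  moreover have "card B = card (B - {c}) + 1"
    using assms(1,2,5) by (metis card_Suc_Diff1 finite_imageI Suc_eq_plus1)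
  moreover have "card A = card (A - K) + card K"
    using assms(1,3) by (simp add: card_Diff_subset card_mono finite_subset)
  ultimately show ?thesis by linarith
qed

text \<open>Refining F to G \<supseteq> F: if a class C of F contains a set X of points pairwise
  separated by G, then C splits into at least |X| classes of G, so G has at least
  |X| - 1 more classes than F.\<close>

lemma num_classes_split:
  assumes FG: "F \<subseteq> G" and C: "C \<in> induced_classes n F" and XC: "X \<subseteq> C"
    and sep: "\<And>x y. x \<in> X \<Longrightarrow> y \<in> X \<Longrightarrow> x \<noteq> y \<Longrightarrow> \<exists>T\<in>G. separates T x y"
  shows "num_classes n F + card X \<le> num_classes n G + 1"
proof -
  define coarsen where "coarsen D = \<Union> (agree_class n F ` D)" for D
  have coarsen_class: "coarsen (agree_class n G x) = agree_class n F x" if "x \<in> {1..n}" for x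
    using that FG unfolding coarsen_def agree_class_def by auto
  have X_pts: "x \<in> {1..n}" "agree_class n F x = C" if "x \<in> X" for x
    using that XC C agree_class_cong[of x n F] by (auto simp: induced_classes_eq agree_class_def)
  have "inj_on (agree_class n G) X"
    using sep agree_class_separated X_pts(1) by (meson inj_onI)
  then have "card (agree_class n G ` X) = card X"
    by (rule card_image)
  moreover have "card (induced_classes n F) + card (agree_class n G ` X)
                 \<le> card (induced_classes n G) + 1"
  proof (rule card_surj_fibre)
    show "coarsen ` induced_classes n G = induced_classes n F"
      unfolding induced_classes_eq image_image using coarsen_class by (intro image_cong) auto
    show "coarsen ` agree_class n G ` X \<subseteq> {C}"
      using X_pts coarsen_class by auto
  qed (use C X_pts in \<open>auto simp: induced_classes_eq\<close>)
  ultimately show ?thesis by (simp add: num_classes_def)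
qed

lemma half_sets_not_cover:
  assumes "finite C" "2 * card (A \<inter> C) \<le> card C" "2 * card (B \<inter> C) \<le> card C"
    and "A \<inter> B \<inter> C \<noteq> {}"
  shows "\<exists>e\<in>C. e \<notin> A \<and> e \<notin> B"
proof (rule ccontr)
  assume "\<not> ?thesis"
  then have "C = (A \<inter> C) \<union> (B \<inter> C)" by blast
  then have "card C + card ((A \<inter> C) \<inter> (B \<inter> C)) = card (A \<inter> C) + card (B \<inter> C)"
    using card_Un_Int[of "A \<inter> C" "B \<inter> C"] assms(1) by simp
  moreover have "card ((A \<inter> C) \<inter> (B \<inter> C)) > 0"
    using assms(1,4) by (auto simp: card_gt_0_iff)
  ultimately show False using assms(2,3) by linarith
qed

theorem mainTheorem10:
  fixes n :: nat and \<T> \<F> :: "nat set set" and C S S' :: "nat set"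
  assumes cover: "test_cover n \<T>"
    and sub: "\<F> \<subseteq> \<T>"
    and one: "\<And>T. T \<in> \<T> - \<F> \<Longrightarrow> num_classes n (\<F> \<union> {T}) \<le> num_classes n \<F> + 1"
    and two: "\<And>T T'. T \<in> \<T> - \<F> \<Longrightarrow> T' \<in> \<T> - \<F> \<Longrightarrow>
                num_classes n (\<F> \<union> {T, T'}) \<le> num_classes n \<F> + 2"
    and half: "\<And>D R. D \<in> induced_classes n \<F> \<Longrightarrow> R \<in> \<T> \<Longrightarrow> is_C_test D R \<Longrightarrow>
                2 * card (R \<inter> D) \<le> card D"
    and C: "C \<in> induced_classes n \<F>"
    and S: "S \<in> \<T>" "is_C_test C S"
    and S': "S' \<in> \<T>" "is_C_test C S'"
  shows "local_portion C S \<subseteq> local_portion C S' \<or> local_portion C S' \<subseteq> local_portion C S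
         \<or> local_portion C S \<inter> local_portion C S' = {}"
proof (rule ccontr)
  assume "\<not> ?thesis"
  then obtain a b d where a: "a \<in> S \<inter> S' \<inter> C" and b: "b \<in> S \<inter> C - S'" and d: "d \<in> S' \<inter> C - S"
    by (auto simp: local_portion_def)
  have "finite C" using C by (auto simp: induced_classes_eq agree_class_def)
  then obtain e where e: "e \<in> C" "e \<notin> S" "e \<notin> S'"
    using half_sets_not_cover[OF _ half[OF C S] half[OF C S']] a by blast
  let ?X = "{a, b, d, e}"
  have "card ?X = 4" using a b d e by (auto simp: card_insert_if)
  moreover have "num_classes n \<F> + card ?X \<le> num_classes n (\<F> \<union> {S, S'}) + 1"
    by (rule num_classes_split[OF _ C]) (use a b d e in \<open>auto simp: separates_iff\<close>)
  moreover have "num_classes n (\<F> \<union> {S, S'}) \<le> num_classes n \<F> + 2"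
    using two S S' C_test_not_in[OF C] by blast
  ultimately show False by linarith
qed

end
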